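(* Let $b_1,b_2,b_3\in\mathbb{R}$ with $b_1b_2b_3\neq 0$ and $b_2b_3<0$, and consider the system $$\dot x_1=b_1x_2,\qquad \dot x_2=b_2x_1x_3,\qquad \dot x_3=b_3x_1x_2 .$$ Let $H>0$ be a constant and set $\gamma=\sqrt{-b_3/b_2}$. Then the solution of this system restricted to the constant level surface $$x_2^2-\frac{b_2}{b_3}x_3^2=2H$$ is $$x_1(t)=\frac{\gamma}{b_3}\dot\theta(t),\qquad x_2(t)=\sqrt{2H}\cos\theta(t),\qquad x_3(t)=\gamma\sqrt{2H}\sin\theta(t),$$ where $\theta(t)$ is a solution of the pendulum equation $$\ddot\theta(t)=\frac{b_1b_3}{\gamma}\sqrt{2H}\cos\theta(t).$$ *)

theory Defs
  imports "HOL-Analysis.Analysis"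
begin

end

(*
  With \<gamma> = sqrt (-b3/b2) we have b3/\<gamma>\<^sup>2 = -b2, so the plane vector (x2, x3/\<gamma>) obeys
  u' = -\<omega> v, v' = \<omega> u with angular velocity \<omega> = (b3/\<gamma>) x1: it rotates, and the level
  surface says its length is sqrt (2H). Choosing \<theta> as the primitive of \<omega> that matches the
  initial polar angle, the components of the vector in the frame turned by \<theta> are constant,
  so x2 = sqrt (2H) cos \<theta> and x3 = \<gamma> sqrt (2H) sin \<theta>. Finally
  \<theta>'' = (b3/\<gamma>) x1' = (b1 b3/\<gamma>) x2, which is the pendulum equation.
*)
theory Submission
  imports Defs
begin

lemma open_interval_eq_einterval:
  fixes I :: "real set"
  assumes "is_interval I" "open I"
  shows "I = einterval (INF x\<in>I. ereal x) (SUP x\<in>I. ereal x)"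
proof (intro set_eqI iffI)
  fix x assume x: "x \<in> I"
  obtain e where e: "e > 0" "ball x e \<subseteq> I" using assms(2) x openE by blast
  have "x - e/2 \<in> I" "x + e/2 \<in> I" using e by (auto intro!: subsetD[OF e(2)] simp: dist_real_def)
  then have "\<exists>y\<in>I. y < x" "\<exists>y\<in>I. x < y" using e(1) by force+
  then have "(INF y\<in>I. ereal y) < ereal x" "ereal x < (SUP y\<in>I. ereal y)"
    unfolding INF_less_iff less_SUP_iff by auto
  then show "x \<in> einterval (INF x\<in>I. ereal x) (SUP x\<in>I. ereal x)" by (simp add: einterval_iff)
next
  fix x assume "x \<in> einterval (INF x\<in>I. ereal x) (SUP x\<in>I. ereal x)"
  then have "(INF y\<in>I. ereal y) < ereal x" "ereal x < (SUP y\<in>I. ereal y)"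
    by (simp_all add: einterval_iff)
  then obtain a b where ab: "a \<in> I" "b \<in> I" "a \<le> x" "x \<le> b"
    unfolding INF_less_iff less_SUP_iff less_ereal.simps(1) by (meson less_imp_le)
  show "x \<in> I" by (rule mem_is_interval_1_I[OF assms(1) ab])
qed

lemma open_interval_has_antiderivative:
  fixes f :: "real \<Rightarrow> real"
  assumes "is_interval I" "open I" "continuous_on I f" "t0 \<in> I"
  obtains F where "F t0 = c" "\<And>t. t \<in> I \<Longrightarrow> (F has_real_derivative f t) (at t)"
proof -
  let ?a = "INF x\<in>I. ereal x" and ?b = "SUP x\<in>I. ereal x"
  have I: "I = einterval ?a ?b" using assms(1,2) by (rule open_interval_eq_einterval)
  have "?a < ?b" using assms(4) I einterval_iff[of t0] by (metis order.strict_trans)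
  moreover have "isCont f x" if "?a < x" "x < ?b" for x :: real
    using that assms(2,3) I by (metis continuous_on_eq_continuous_at einterval_iff)
  ultimately obtain G where G: "\<And>x. x \<in> I \<Longrightarrow> (G has_vector_derivative f x) (at x)"
    using einterval_antiderivative[of ?a ?b f] I einterval_iff by metis
  show ?thesis
  proof (rule that[of "\<lambda>t. G t - G t0 + c"])
    show "((\<lambda>t. G t - G t0 + c) has_real_derivative f t) (at t)" if "t \<in> I" for t
      using G[OF that] by (auto simp: has_real_derivative_iff_has_vector_derivative intro!: derivative_eq_intros)
  qed simp
qed

lemma polar_coordinates:
  fixes a b :: real
  obtains \<phi> where "a = sqrt (a\<^sup>2 + b\<^sup>2) * cos \<phi>" "b = sqrt (a\<^sup>2 + b\<^sup>2) * sin \<phi>"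
proof (cases "a\<^sup>2 + b\<^sup>2 = 0")
  case True
  then show ?thesis using that by (simp add: sum_power2_eq_zero_iff)
next
  case False
  define r where "r = sqrt (a\<^sup>2 + b\<^sup>2)"
  have "a\<^sup>2 + b\<^sup>2 > 0" using False sum_power2_ge_zero[of a b] by linarith
  then have r: "r > 0" "r\<^sup>2 = a\<^sup>2 + b\<^sup>2" unfolding r_def by simp_all
  have "(a / r)\<^sup>2 + (b / r)\<^sup>2 = 1"
    using r(1) by (simp add: power_divide add_divide_distrib[symmetric] r(2)[symmetric])
  then obtain \<phi> where "a / r = cos \<phi>" "b / r = sin \<phi>" using sincos_total_2pi by metis
  then show ?thesis using that r(1) False unfolding r_def[symmetric] by (simp add: field_simps)
qed

lemma rotation_ode_polar:
  fixes u v \<theta> \<omega> :: "real \<Rightarrow> real"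
  assumes I: "convex I" "t0 \<in> I"
    and \<theta>: "\<And>t. t \<in> I \<Longrightarrow> (\<theta> has_real_derivative \<omega> t) (at t within I)"
    and u: "\<And>t. t \<in> I \<Longrightarrow> (u has_real_derivative - \<omega> t * v t) (at t within I)"
    and v: "\<And>t. t \<in> I \<Longrightarrow> (v has_real_derivative \<omega> t * u t) (at t within I)"
    and init: "u t0 = r * cos (\<theta> t0)" "v t0 = r * sin (\<theta> t0)"
    and t: "t \<in> I"
  shows "u t = r * cos (\<theta> t) \<and> v t = r * sin (\<theta> t)"
proof -
  \<comment> \<open>the coordinates of (u, v) in the frame turned by \<theta> are constant\<close>
  define p where "p s = u s * cos (\<theta> s) + v s * sin (\<theta> s)" for s
  define q where "q s = v s * cos (\<theta> s) - u s * sin (\<theta> s)" for s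
  have "(p has_real_derivative 0) (at s within I)" if "s \<in> I" for s
    unfolding p_def using \<theta>[OF that] u[OF that] v[OF that]
    by (auto intro!: derivative_eq_intros simp: algebra_simps)
  then obtain cp where "\<And>s. s \<in> I \<Longrightarrow> p s = cp"
    using has_field_derivative_zero_constant[OF I(1)] by blast
  moreover have "p t0 = r"
    using sin_cos_squared_add3[of "\<theta> t0"] unfolding p_def init by algebra
  ultimately have p: "p t = r" using I(2) t by metis
  have "(q has_real_derivative 0) (at s within I)" if "s \<in> I" for s
    unfolding q_def using \<theta>[OF that] u[OF that] v[OF that]
    by (auto intro!: derivative_eq_intros simp: algebra_simps)
  then obtain cq where "\<And>s. s \<in> I \<Longrightarrow> q s = cq"
    using has_field_derivative_zero_constant[OF I(1)] by blast
  moreover have "q t0 = 0" using init by (simp add: q_def)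
  ultimately have q: "q t = 0" using I(2) t by metis
  have "u t = p t * cos (\<theta> t) - q t * sin (\<theta> t)" "v t = p t * sin (\<theta> t) + q t * cos (\<theta> t)"
    using sin_cos_squared_add3[of "\<theta> t"] unfolding p_def q_def by algebra+
  then show ?thesis using p q by simp
qed

lemma rotation_ode_angle:
  fixes u v \<omega> :: "real \<Rightarrow> real"
  assumes I: "is_interval I" "open I" "t0 \<in> I" and \<omega>: "continuous_on I \<omega>"
    and u: "\<And>t. t \<in> I \<Longrightarrow> (u has_real_derivative - \<omega> t * v t) (at t)"
    and v: "\<And>t. t \<in> I \<Longrightarrow> (v has_real_derivative \<omega> t * u t) (at t)"
  obtains \<theta> where "\<And>t. t \<in> I \<Longrightarrow> (\<theta> has_real_derivative \<omega> t) (at t)"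
    and "\<And>t. t \<in> I \<Longrightarrow> u t = sqrt ((u t0)\<^sup>2 + (v t0)\<^sup>2) * cos (\<theta> t)
                          \<and> v t = sqrt ((u t0)\<^sup>2 + (v t0)\<^sup>2) * sin (\<theta> t)"
proof -
  obtain \<phi>0 where \<phi>0: "u t0 = sqrt ((u t0)\<^sup>2 + (v t0)\<^sup>2) * cos \<phi>0"
      "v t0 = sqrt ((u t0)\<^sup>2 + (v t0)\<^sup>2) * sin \<phi>0"
    by (rule polar_coordinates)
  obtain \<theta> where \<theta>: "\<theta> t0 = \<phi>0" "\<And>t. t \<in> I \<Longrightarrow> (\<theta> has_real_derivative \<omega> t) (at t)"
    using open_interval_has_antiderivative[OF I(1,2) \<omega> I(3)] by metis
  have "convex I" using I(1) by (simp add: is_interval_convex_1)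
  then have "u t = sqrt ((u t0)\<^sup>2 + (v t0)\<^sup>2) * cos (\<theta> t)
    \<and> v t = sqrt ((u t0)\<^sup>2 + (v t0)\<^sup>2) * sin (\<theta> t)" if "t \<in> I" for t
    using rotation_ode_polar[of I t0 \<theta> \<omega> u v _ t] I(3) that \<theta> \<phi>0 u v
    by (simp add: has_field_derivative_at_within)
  with \<theta>(2) show ?thesis using that by blast
qed

lemma quadratic_system_rotation_form:
  fixes x y z :: "real \<Rightarrow> real" and \<gamma> :: real
  assumes \<gamma>: "c / \<gamma>\<^sup>2 = - b"
    and y': "(y has_real_derivative b * x t * z t) (at t within S)"
    and z': "(z has_real_derivative c * x t * y t) (at t within S)"
  shows "(y has_real_derivative - (c / \<gamma> * x t) * (z t / \<gamma>)) (at t within S)"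
    and "((\<lambda>s. z s / \<gamma>) has_real_derivative (c / \<gamma> * x t) * y t) (at t within S)"
proof -
  have "- (c / \<gamma> * x t) * (z t / \<gamma>) = - (c / \<gamma>\<^sup>2) * x t * z t"
    by (simp add: power2_eq_square)
  then show "(y has_real_derivative - (c / \<gamma> * x t) * (z t / \<gamma>)) (at t within S)"
    using y' \<gamma> by simp
  have "((\<lambda>s. z s / \<gamma>) has_real_derivative c * x t * y t / \<gamma>) (at t within S)"
    using z' by (rule DERIV_cdivide)
  then show "((\<lambda>s. z s / \<gamma>) has_real_derivative (c / \<gamma> * x t) * y t) (at t within S)"
    by simp
qed

theorem proposition2p2:
  fixes b1 b2 b3 H :: real and I :: "real set"
    and x1 x2 x3 :: "real \<Rightarrow> real"
  assumes nz: "b1 * b2 * b3 \<noteq> 0" and neg: "b2 * b3 < 0" and H: "H > 0"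
    and I: "is_interval I" "open I"
    and ode1: "\<And>t. t \<in> I \<Longrightarrow> (x1 has_real_derivative (b1 * x2 t)) (at t)"
    and ode2: "\<And>t. t \<in> I \<Longrightarrow> (x2 has_real_derivative (b2 * x1 t * x3 t)) (at t)"
    and ode3: "\<And>t. t \<in> I \<Longrightarrow> (x3 has_real_derivative (b3 * x1 t * x2 t)) (at t)"
    and level: "\<And>t. t \<in> I \<Longrightarrow> (x2 t)\<^sup>2 - b2 / b3 * (x3 t)\<^sup>2 = 2 * H"
  shows "\<exists>\<theta> \<theta>' :: real \<Rightarrow> real. \<forall>t\<in>I.
           (\<theta> has_real_derivative \<theta>' t) (at t) \<and>
           (\<theta>' has_real_derivative
              (b1 * b3 / sqrt (- b3 / b2) * sqrt (2 * H) * cos (\<theta> t))) (at t) \<and>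
           x1 t = sqrt (- b3 / b2) / b3 * \<theta>' t \<and>
           x2 t = sqrt (2 * H) * cos (\<theta> t) \<and>
           x3 t = sqrt (- b3 / b2) * sqrt (2 * H) * sin (\<theta> t)"
proof (cases "I = {}")
  case False
  then obtain t0 where t0: "t0 \<in> I" by blast
  define \<gamma> where "\<gamma> = sqrt (- b3 / b2)"
  define R where "R = sqrt (2 * H)"
  define \<omega> where "\<omega> = (\<lambda>t. b3 / \<gamma> * x1 t)"
  have b2: "b2 \<noteq> 0" and b3: "b3 \<noteq> 0" using nz by auto
  have "- b3 / b2 > 0" using neg by (auto simp: divide_less_0_iff mult_less_0_iff)
  then have \<gamma>: "\<gamma> > 0" "b3 / \<gamma>\<^sup>2 = - b2" using b3 by (auto simp: \<gamma>_def)
  have "continuous_on I \<omega>"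
    unfolding \<omega>_def using ode1
    by (intro continuous_intros continuous_at_imp_continuous_on) (metis DERIV_isCont)
  moreover have "(x2 has_real_derivative - \<omega> t * (x3 t / \<gamma>)) (at t)"
    and "((\<lambda>s. x3 s / \<gamma>) has_real_derivative \<omega> t * x2 t) (at t)" if "t \<in> I" for t
    using quadratic_system_rotation_form[where x = x1 and y = x2 and z = x3,
        OF \<gamma>(2) ode2[OF that] ode3[OF that]]
    by (simp_all add: \<omega>_def)
  ultimately obtain \<theta> where \<theta>: "\<And>t. t \<in> I \<Longrightarrow> (\<theta> has_real_derivative \<omega> t) (at t)"
    and polar: "\<And>t. t \<in> I \<Longrightarrow> x2 t = sqrt ((x2 t0)\<^sup>2 + (x3 t0 / \<gamma>)\<^sup>2) * cos (\<theta> t)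
                   \<and> x3 t / \<gamma> = sqrt ((x2 t0)\<^sup>2 + (x3 t0 / \<gamma>)\<^sup>2) * sin (\<theta> t)"
    using rotation_ode_angle[OF I t0, of \<omega> x2 "\<lambda>s. x3 s / \<gamma>"] by blast
  have radius: "sqrt ((x2 t0)\<^sup>2 + (x3 t0 / \<gamma>)\<^sup>2) = R"
    using level[OF t0] \<gamma> b2 by (simp add: R_def power_divide field_simps)
  show ?thesis
  proof (intro exI ballI conjI)
    fix t assume t: "t \<in> I"
    show "(\<theta> has_real_derivative \<omega> t) (at t)" by (rule \<theta>[OF t])
    have "(\<omega> has_real_derivative b3 / \<gamma> * (b1 * x2 t)) (at t)"
      unfolding \<omega>_def using ode1[OF t] by (rule DERIV_cmult)
    then show "(\<omega> has_real_derivative b1 * b3 / sqrt (- b3 / b2) * sqrt (2 * H) * cos (\<theta> t)) (at t)"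
      using polar[OF t] radius by (simp add: \<gamma>_def R_def mult_ac)
    show "x1 t = sqrt (- b3 / b2) / b3 * \<omega> t"
      unfolding \<omega>_def \<gamma>_def[symmetric] using \<gamma>(1) b3 by simp
    show "x2 t = sqrt (2 * H) * cos (\<theta> t)" "x3 t = sqrt (- b3 / b2) * sqrt (2 * H) * sin (\<theta> t)"
      using polar[OF t] radius \<gamma>(1) unfolding R_def \<gamma>_def[symmetric] by (simp_all add: field_simps)
  qed
qed simp

end
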